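(* Let $x_0,\dots,x_T$ be generated by $x_0=0_n$, $x_{t+1}=\bar A f(x_t)+\bar d_t$ for $t=0,\dots,T-1$. Then $\bar A$ is a global minimizer of $$\min_{A\in\mathbb{R}^{n\times m}} \sum_{t=0}^{T-1}\|(\bar A - A) f(x_t)+\bar d_t\|_2$$ if and only if $$\sum_{t\in\mathcal K}\hat d_t^\top Z^\top f(x_t)\le \sum_{t\in\mathcal K^c}\|Z^\top f(x_t)\|_2\qquad\text{for all } Z\in\mathbb{R}^{m\times n}.$$
   Context: $f:\mathbb{R}^n\to\mathbb{R}^m$ is a given (basis) function, $\bar A\in\mathbb{R}^{n\times m}$ is the ground-truth matrix, and $\bar d_0,\dots,\bar d_{T-1}\in\mathbb{R}^n$ are attack vectors. The attack set is $\mathcal K:=\{t\in\{0,\dots,T-1\}:\bar d_t\neq 0\}$, $\mathcal K^c:=\{0,\dots,T-1\}\setminus\mathcal K$, and $\hat d_t:=\bar d_t/\|\bar d_t\|_2$ for $t\in\mathcal K$. Note the objective equals $\sum_{t=0}^{T-1}\|x_{t+1}-Af(x_t)\|_2$. *)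

theory Defs
  imports "HOL-Analysis.Analysis"
begin

fun traj :: "real^'m^'n \<Rightarrow> (real^'n \<Rightarrow> real^'m) \<Rightarrow> (nat \<Rightarrow> real^'n) \<Rightarrow> nat \<Rightarrow> real^'n" where
  "traj Abar f d 0 = 0"
| "traj Abar f d (Suc t) = Abar *v f (traj Abar f d t) + d t"

definition objective :: "real^'m^'n \<Rightarrow> (real^'n \<Rightarrow> real^'m) \<Rightarrow> (nat \<Rightarrow> real^'n) \<Rightarrow> nat \<Rightarrow> real^'m^'n \<Rightarrow> real" where
  "objective Abar f d T A = (\<Sum>t<T. norm ((Abar - A) *v f (traj Abar f d t) + d t))"

definition attack_set :: "(nat \<Rightarrow> real^'n) \<Rightarrow> nat \<Rightarrow> nat set" where
  "attack_set d T = {t. t < T \<and> d t \<noteq> 0}"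

end

theory Submission
  imports Defs
begin

text \<open>The objective splits into the attacked terms
  \<open>\<parallel>d\<^sub>t + B f(x\<^sub>t)\<parallel>\<close> (\<open>B = Abar - A\<close>), which are differentiable at \<open>B = 0\<close> with gradient
  direction \<open>sgn d\<^sub>t\<close>, and the unattacked terms \<open>\<parallel>B f(x\<^sub>t)\<parallel>\<close>, which are positively
  homogeneous. Hence \<open>B = 0\<close> is optimal iff the one-sided directional derivative is
  nonnegative in every direction: necessity by differentiating along a ray, sufficiency
  because the Cauchy-Schwarz bound \<open>\<parallel>d\<parallel> + sgn d \<bullet> v \<le> \<parallel>v + d\<parallel>\<close> is the subgradient
  inequality of the norm.\<close>

lemma has_real_derivative_norm_diff_scaleR:
  fixes d w :: "'a::real_inner"
  assumes "d \<noteq> 0"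
  shows "((\<lambda>s. norm (d - s *\<^sub>R w)) has_real_derivative - (sgn d \<bullet> w)) (at 0)"
proof -
  have "((\<lambda>s. d - s *\<^sub>R w) has_derivative (\<lambda>h. - (h *\<^sub>R w))) (at 0)"
    by (auto intro!: derivative_eq_intros)
  from has_derivative_compose[OF this has_derivative_norm[of "d - 0 *\<^sub>R w"]] assms
  have "((\<lambda>s. norm (d - s *\<^sub>R w)) has_derivative (\<lambda>h. - (h * (w \<bullet> sgn d)))) (at 0)"
    by simp
  then show ?thesis
    unfolding has_field_derivative_def
    by (subst inner_commute) (erule has_derivative_eq_rhs, simp add: fun_eq_iff)
qed

lemma norm_add_inner_sgn_le_norm_add:
  fixes d v :: "'a::real_inner"
  shows "norm d + sgn d \<bullet> v \<le> norm (v + d)"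
proof (cases "d = 0")
  case False
  have "sgn d \<bullet> (v + d) \<le> norm (sgn d) * norm (v + d)"
    by (rule norm_cauchy_schwarz)
  moreover have "norm (sgn d) = 1" and "sgn d \<bullet> d = norm d"
    using False by (simp_all add: sgn_div_norm power2_norm_eq_inner[symmetric] power2_eq_square)
  ultimately show ?thesis
    by (simp add: inner_add_right)
qed simp

lemma sum_norm_minimal_along_ray_imp:
  fixes d w :: "'i \<Rightarrow> 'a::real_inner"
  assumes nonzero: "\<And>t. t \<in> K \<Longrightarrow> d t \<noteq> 0"
    and minimal: "\<And>s. s \<ge> 0 \<Longrightarrow>
      (\<Sum>t\<in>K. norm (d t)) \<le> (\<Sum>t\<in>K. norm (d t - s *\<^sub>R w t)) + s * (\<Sum>t\<in>L. norm (w t))"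
  shows "(\<Sum>t\<in>K. sgn (d t) \<bullet> w t) \<le> (\<Sum>t\<in>L. norm (w t))"
proof (rule ccontr)
  define g where
    "g s = (\<Sum>t\<in>K. norm (d t - s *\<^sub>R w t)) + s * (\<Sum>t\<in>L. norm (w t))" for s
  define D where "D = (\<Sum>t\<in>K. - (sgn (d t) \<bullet> w t)) + (\<Sum>t\<in>L. norm (w t))"
  assume "\<not> ?thesis"
  then have "D < 0"
    by (simp add: D_def sum_negf)
  moreover have "(g has_real_derivative D) (at 0)"
    unfolding g_def D_def
    by (auto intro!: derivative_eq_intros has_real_derivative_norm_diff_scaleR nonzero)
  ultimately obtain e where "e > 0" and "\<And>h. 0 < h \<Longrightarrow> h < e \<Longrightarrow> g (0 + h) < g 0"
    using DERIV_neg_dec_right by blast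
  then have "g (e / 2) < g 0"
    by simp
  moreover have "g 0 \<le> g (e / 2)"
    using minimal[of "e / 2"] \<open>e > 0\<close> by (simp add: g_def)
  ultimately show False
    by simp
qed

lemma sum_norm_minimal_at_zero_iff:
  fixes d :: "'i \<Rightarrow> 'a::real_inner" and V :: "'b::real_vector \<Rightarrow> 'i \<Rightarrow> 'a"
  assumes nonzero: "\<And>t. t \<in> K \<Longrightarrow> d t \<noteq> 0"
    and homogeneous: "\<And>s B t. V (s *\<^sub>R B) t = s *\<^sub>R V B t"
  shows "(\<forall>B. (\<Sum>t\<in>K. norm (d t)) \<le> (\<Sum>t\<in>K. norm (V B t + d t)) + (\<Sum>t\<in>L. norm (V B t)))
    \<longleftrightarrow> (\<forall>B. (\<Sum>t\<in>K. sgn (d t) \<bullet> V B t) \<le> (\<Sum>t\<in>L. norm (V B t)))"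
proof safe
  fix B
  assume minimal: "\<forall>B. (\<Sum>t\<in>K. norm (d t)) \<le> (\<Sum>t\<in>K. norm (V B t + d t)) + (\<Sum>t\<in>L. norm (V B t))"
  show "(\<Sum>t\<in>K. sgn (d t) \<bullet> V B t) \<le> (\<Sum>t\<in>L. norm (V B t))"
  proof (rule sum_norm_minimal_along_ray_imp[OF nonzero])
    fix s :: real assume "s \<ge> 0"
    have flip: "V ((- s) *\<^sub>R B) t = - (s *\<^sub>R V B t)" for t
      by (subst homogeneous) simp
    from minimal[rule_format, of "(- s) *\<^sub>R B"] \<open>s \<ge> 0\<close>
    show "(\<Sum>t\<in>K. norm (d t)) \<le> (\<Sum>t\<in>K. norm (d t - s *\<^sub>R V B t)) + s * (\<Sum>t\<in>L. norm (V B t))"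
      unfolding flip by (simp add: sum_distrib_left)
  qed
next
  fix B
  assume "\<forall>B. (\<Sum>t\<in>K. sgn (d t) \<bullet> V B t) \<le> (\<Sum>t\<in>L. norm (V B t))"
  from this[rule_format, of "- B"]
  have "- (\<Sum>t\<in>K. sgn (d t) \<bullet> V B t) \<le> (\<Sum>t\<in>L. norm (V B t))"
    using homogeneous[of "- 1" B] by (simp add: sum_negf)
  moreover have "(\<Sum>t\<in>K. norm (d t) + sgn (d t) \<bullet> V B t) \<le> (\<Sum>t\<in>K. norm (V B t + d t))"
    by (intro sum_mono norm_add_inner_sgn_le_norm_add)
  ultimately show "(\<Sum>t\<in>K. norm (d t)) \<le> (\<Sum>t\<in>K. norm (V B t + d t)) + (\<Sum>t\<in>L. norm (V B t))"
    by (simp add: sum.distrib)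
qed

lemma all_diff_left_iff: "(\<forall>x :: 'a::group_add. P x) \<longleftrightarrow> (\<forall>y. P (a - y))"
proof (intro iffI allI)
  fix x
  assume "\<forall>y. P (a - y)"
  from this[rule_format, of "- x + a"] show "P x"
    by (simp add: diff_add_eq_diff_diff_swap)
qed simp

lemma all_transpose_iff: "(\<forall>Z :: 'a^'n^'m. P (transpose Z)) \<longleftrightarrow> (\<forall>B. P B)"
  by (metis transpose_transpose)

lemma objective_split_attack_set:
  "objective Abar f d T A =
     (\<Sum>t\<in>attack_set d T. norm ((Abar - A) *v f (traj Abar f d t) + d t))
   + (\<Sum>t\<in>{..<T} - attack_set d T. norm ((Abar - A) *v f (traj Abar f d t)))"
proof -
  have "attack_set d T \<subseteq> {..<T}"
    by (auto simp: attack_set_def)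
  then show ?thesis
    unfolding objective_def
    by (subst sum.subset_diff[of "attack_set d T"]) (auto simp: attack_set_def add.commute)
qed

theorem theorem1:
  fixes Abar :: "real^'m^'n" and f :: "real^'n \<Rightarrow> real^'m"
    and d :: "nat \<Rightarrow> real^'n" and T :: nat
  shows "(\<forall>A :: real^'m^'n. objective Abar f d T Abar \<le> objective Abar f d T A)
     \<longleftrightarrow>
     (\<forall>Z :: real^'n^'m.
        (\<Sum>t\<in>attack_set d T. (d t /\<^sub>R norm (d t)) \<bullet> (transpose Z *v f (traj Abar f d t)))
        \<le> (\<Sum>t\<in>{..<T} - attack_set d T. norm (transpose Z *v f (traj Abar f d t))))"
proof -
  define y where "y t = f (traj Abar f d t)" for t
  define K where "K = attack_set d T"
  have nonzero: "d t \<noteq> 0" if "t \<in> K" for t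
    using that by (simp add: K_def attack_set_def)
  have homogeneous: "(s *\<^sub>R B) *v y t = s *\<^sub>R (B *v y t)" for s and B :: "real^'m^'n" and t
    by (simp add: scaleR_matrix_vector_assoc)
  have "(\<forall>A. objective Abar f d T Abar \<le> objective Abar f d T A) \<longleftrightarrow>
      (\<forall>B. objective Abar f d T Abar \<le> objective Abar f d T (Abar - B))"
    by (rule all_diff_left_iff)
  also have "\<dots> \<longleftrightarrow> (\<forall>B :: real^'m^'n. (\<Sum>t\<in>K. norm (d t))
      \<le> (\<Sum>t\<in>K. norm (B *v y t + d t)) + (\<Sum>t\<in>{..<T} - K. norm (B *v y t)))"
    by (simp add: objective_split_attack_set K_def y_def)
  also have "\<dots> \<longleftrightarrow> (\<forall>B :: real^'m^'n.
      (\<Sum>t\<in>K. sgn (d t) \<bullet> (B *v y t)) \<le> (\<Sum>t\<in>{..<T} - K. norm (B *v y t)))"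
    by (rule sum_norm_minimal_at_zero_iff[OF nonzero homogeneous])
  also have "\<dots> \<longleftrightarrow> (\<forall>Z :: real^'n^'m.
      (\<Sum>t\<in>K. (d t /\<^sub>R norm (d t)) \<bullet> (transpose Z *v y t)) \<le> (\<Sum>t\<in>{..<T} - K. norm (transpose Z *v y t)))"
    unfolding sgn_div_norm by (rule all_transpose_iff[symmetric])
  finally show ?thesis
    by (simp add: K_def y_def)
qed

end
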